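(* For every boolean function $f:\{-1,1\}^n\to\{-1,1\}$ and every $\epsilon\in(0,\tfrac12)$, $$\sum_{S\subseteq[n]}|\hat f(S)|^{2(1+\epsilon)}\ge 1-(3\epsilon+2\epsilon^2)I(f)-\sum_{k=1}^n\Big(\Big(\frac{I_k(f)}{4}\Big)^{-\epsilon}-1\Big)I_k(f),$$ where terms with $I_k(f)=0$ in the last sum are interpreted as $0$.
   Context: Let $x$ be uniform on $\{-1,1\}^n$; $\mu_k$ flips the $k$-th coordinate; $I_k(f)=\mathbb{P}_x[f(x)\neq f(\mu_k(x))]$, $I(f)=\sum_k I_k(f)$; $\hat f(S)=\mathbb{E}_x[f(x)\prod_{k\in S}x_k]$ for $S\subseteq[n]$. *)

theory Defs
  imports "HOL-Analysis.Analysis" "HOL-Library.FuncSet"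
begin

text \<open>The Boolean cube {-1,1}^n, with coordinates indexed by 0..<n (standing for [n]).
  Points are functions nat => real, extensional (value undefined outside 0..<n).\<close>
definition cube :: "nat \<Rightarrow> (nat \<Rightarrow> real) set" where
  "cube n = PiE {0..<n} (\<lambda>_. {-1, 1})"

definition cube_exp :: "nat \<Rightarrow> ((nat \<Rightarrow> real) \<Rightarrow> real) \<Rightarrow> real" where
  "cube_exp n g = (\<Sum>x\<in>cube n. g x) / real (card (cube n))"

definition cube_prob :: "nat \<Rightarrow> ((nat \<Rightarrow> real) \<Rightarrow> bool) \<Rightarrow> real" where
  "cube_prob n P = real (card {x\<in>cube n. P x}) / real (card (cube n))"

definition flip :: "nat \<Rightarrow> (nat \<Rightarrow> real) \<Rightarrow> (nat \<Rightarrow> real)" where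
  "flip k x = x(k := - x k)"

definition boolean_fun :: "nat \<Rightarrow> ((nat \<Rightarrow> real) \<Rightarrow> real) \<Rightarrow> bool" where
  "boolean_fun n f \<longleftrightarrow> (\<forall>x\<in>cube n. f x \<in> {-1, 1})"

definition influence :: "nat \<Rightarrow> ((nat \<Rightarrow> real) \<Rightarrow> real) \<Rightarrow> nat \<Rightarrow> real" where
  "influence n f k = cube_prob n (\<lambda>x. f x \<noteq> f (flip k x))"

definition total_influence :: "nat \<Rightarrow> ((nat \<Rightarrow> real) \<Rightarrow> real) \<Rightarrow> real" where
  "total_influence n f = (\<Sum>k<n. influence n f k)"

definition fourier_coeff :: "nat \<Rightarrow> ((nat \<Rightarrow> real) \<Rightarrow> real) \<Rightarrow> nat set \<Rightarrow> real" where
  "fourier_coeff n f S = cube_exp n (\<lambda>x. f x * (\<Prod>k\<in>S. x k))"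

end

theory Submission
  imports Defs
begin

text \<open>By Parseval the weights \<open>w S = (fourier_coeff n f S)\<^sup>2\<close> form a probability distribution
  on the subsets of \<open>[n]\<close>, and \<open>I\<^sub>k(f)\<close> is the probability that \<open>k \<in> S\<close>. Since
  \<open>w powr (1 + \<epsilon>) \<ge> w + \<epsilon> w ln w\<close>, the left-hand side is at least \<open>1 - \<epsilon> H(w)\<close>. Entropy is
  subadditive, so \<open>H(w)\<close> is at most the sum of the binary entropies of the marginals \<open>I\<^sub>k(f)\<close>,
  and each of these is bounded by the corresponding term on the right.\<close>

lemma one_plus_mult_ln_le_powr:
  fixes w e :: real
  assumes "0 < w"
  shows "1 + e * ln w \<le> w powr e"
  using exp_ge_add_one_self[of "e * ln w"] assms by (simp add: powr_def mult.commute)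

lemma mult_ln_ge_minus_one:
  fixes y :: real
  assumes "0 \<le> y"
  shows "y - 1 \<le> y * ln y"
proof (cases "y = 0")
  case False
  with assms have "0 < y" by simp
  have "ln (1 / y) \<le> 1 / y - 1"
    using \<open>0 < y\<close> by (intro ln_le_minus_one) simp
  then show ?thesis
    using \<open>0 < y\<close> by (simp add: ln_div field_simps)
qed simp

lemma abs_powr_double:
  fixes c a :: real
  shows "\<bar>c\<bar> powr (2 * a) = (c\<^sup>2) powr a"
proof -
  have "\<bar>c\<bar> powr (2 * a) = (\<bar>c\<bar> powr 2) powr a"
    by (rule powr_powr[symmetric])
  also have "\<bar>c\<bar> powr 2 = c\<^sup>2"
    by (cases "c = 0") (simp_all add: powr_numeral)
  finally show ?thesis .
qed

lemma sum_powr_ge_one_plus_negentropy: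
  fixes w :: "'a \<Rightarrow> real" and e :: real
  assumes "finite X" "\<And>x. x \<in> X \<Longrightarrow> 0 \<le> w x" "(\<Sum>x\<in>X. w x) = 1"
  shows "1 + e * (\<Sum>x\<in>X. w x * ln (w x)) \<le> (\<Sum>x\<in>X. w x powr (1 + e))"
proof -
  have "w x + e * (w x * ln (w x)) \<le> w x powr (1 + e)" if "x \<in> X" for x
  proof (cases "w x = 0")
    case False
    with assms(2)[OF that] have "0 < w x" by simp
    then have "w x * (1 + e * ln (w x)) \<le> w x * w x powr e"
      by (intro mult_left_mono one_plus_mult_ln_le_powr) simp_all
    then show ?thesis
      using \<open>0 < w x\<close> by (simp add: powr_add algebra_simps)
  qed simp
  then have "(\<Sum>x\<in>X. w x + e * (w x * ln (w x))) \<le> (\<Sum>x\<in>X. w x powr (1 + e))"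
    by (rule sum_mono)
  then show ?thesis
    using assms(3) by (simp add: sum.distrib sum_distrib_left)
qed

lemma binary_negentropy_lower_bound:
  fixes p e :: real
  assumes "0 \<le> p" "p \<le> 1" "0 \<le> e"
  shows "- (3 * e + 2 * e\<^sup>2) * p - (if p = 0 then 0 else ((p / 4) powr (- e) - 1) * p)
           \<le> e * (p * ln p + (1 - p) * ln (1 - p))"
proof (cases "p = 0")
  case False
  with assms have "0 < p" by simp
  have "1 + (- e) * ln (p / 4) \<le> (p / 4) powr (- e)"
    using \<open>0 < p\<close> by (intro one_plus_mult_ln_le_powr) simp
  then have "e * ln 4 - e * ln p \<le> (p / 4) powr (- e) - 1"
    using \<open>0 < p\<close> by (simp add: ln_div algebra_simps)
  moreover have "0 \<le> e * ln 4"
    using assms by simp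
  ultimately have "- (e * p * ln p) \<le> ((p / 4) powr (- e) - 1) * p"
    using \<open>0 < p\<close> mult_right_mono[of "- (e * ln p)" "(p / 4) powr (- e) - 1" p]
    by (simp add: algebra_simps)
  moreover have "- e * p \<le> e * ((1 - p) * ln (1 - p))"
    using mult_left_mono[OF mult_ln_ge_minus_one[of "1 - p"], of e] assms
    by (simp add: algebra_simps)
  moreover have "0 \<le> (2 * e + 2 * e\<^sup>2) * p"
    using assms by simp
  ultimately show ?thesis
    using False by (simp add: algebra_simps)
qed simp

subsection \<open>Subadditivity of entropy\<close>

lemma gibbs_inequality:
  fixes w q :: "'a \<Rightarrow> real"
  assumes "finite X"
    and "\<And>x. x \<in> X \<Longrightarrow> 0 \<le> w x" "\<And>x. x \<in> X \<Longrightarrow> 0 \<le> q x"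
    and "\<And>x. x \<in> X \<Longrightarrow> 0 < w x \<Longrightarrow> 0 < q x"
    and "(\<Sum>x\<in>X. q x) \<le> (\<Sum>x\<in>X. w x)"
  shows "(\<Sum>x\<in>X. w x * ln (q x)) \<le> (\<Sum>x\<in>X. w x * ln (w x))"
proof -
  have "w x * ln (q x) - w x * ln (w x) \<le> q x - w x" if "x \<in> X" for x
  proof (cases "w x = 0")
    case False
    with assms(2)[OF that] have "0 < w x" by simp
    with assms(4)[OF that] have "0 < q x" by simp
    have "ln (q x / w x) \<le> q x / w x - 1"
      using \<open>0 < q x\<close> \<open>0 < w x\<close> by (intro ln_le_minus_one) simp
    then have "w x * (ln (q x) - ln (w x)) \<le> w x * (q x / w x - 1)"
      using \<open>0 < q x\<close> \<open>0 < w x\<close> by (intro mult_left_mono) (simp_all add: ln_div)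
    also have "\<dots> = q x - w x"
      using \<open>0 < w x\<close> by (simp add: field_simps)
    finally show ?thesis
      by (simp add: algebra_simps)
  qed (use assms(3) that in simp)
  then have "(\<Sum>x\<in>X. w x * ln (q x) - w x * ln (w x)) \<le> (\<Sum>x\<in>X. q x - w x)"
    by (rule sum_mono)
  then show ?thesis
    using assms(5) by (simp add: sum_subtractf)
qed

text \<open>Comparing \<open>w\<close> with the product of its marginals in Gibbs' inequality gives subadditivity of entropy.\<close>
definition bernoulli_product :: "('a \<Rightarrow> real) \<Rightarrow> 'a set \<Rightarrow> 'a set \<Rightarrow> real" where
  "bernoulli_product p A S = (\<Prod>k\<in>A. if k \<in> S then p k else 1 - p k)"

lemma sum_bernoulli_product:
  assumes "finite A"
  shows "(\<Sum>S\<in>Pow A. bernoulli_product p A S) = 1"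
proof -
  have "bernoulli_product p A S = (\<Prod>k\<in>S. p k) * (\<Prod>k\<in>A - S. 1 - p k)" if "S \<subseteq> A" for S
  proof -
    have "bernoulli_product p A S
        = (\<Prod>k\<in>S. if k \<in> S then p k else 1 - p k) * (\<Prod>k\<in>A - S. if k \<in> S then p k else 1 - p k)"
      unfolding bernoulli_product_def
      by (subst prod.subset_diff[OF that assms]) (rule mult.commute)
    also have "\<dots> = (\<Prod>k\<in>S. p k) * (\<Prod>k\<in>A - S. 1 - p k)"
      by (intro arg_cong2[where f = "(*)"] prod.cong) auto
    finally show ?thesis .
  qed
  then have "(\<Sum>S\<in>Pow A. bernoulli_product p A S)
      = (\<Sum>S\<in>Pow A. (\<Prod>k\<in>S. p k) * (\<Prod>k\<in>A - S. 1 - p k))"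
    by simp
  also have "\<dots> = (\<Prod>k\<in>A. p k + (1 - p k))"
    by (rule prod_add[OF assms, symmetric])
  finally show ?thesis
    by simp
qed

context
  fixes A :: "'a set" and w :: "'a set \<Rightarrow> real" and p :: "'a \<Rightarrow> real"
  assumes finite: "finite A" and nonneg: "\<And>S. S \<in> Pow A \<Longrightarrow> 0 \<le> w S"
    and total: "(\<Sum>S\<in>Pow A. w S) = 1"
    and marginal: "\<And>k. k \<in> A \<Longrightarrow> p k = (\<Sum>S\<in>Pow A. if k \<in> S then w S else 0)"
begin

lemma one_minus_marginal: "k \<in> A \<Longrightarrow> 1 - p k = (\<Sum>S\<in>Pow A. if k \<in> S then 0 else w S)"
  using total marginal sum.distrib[of "\<lambda>S. if k \<in> S then w S else 0"
      "\<lambda>S. if k \<in> S then 0 else w S" "Pow A"]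
  by (simp add: if_distrib cong: if_cong)

lemma weight_le_marginal_factor:
  assumes "S \<in> Pow A" "k \<in> A"
  shows "w S \<le> (if k \<in> S then p k else 1 - p k)"
proof -
  have "(if k \<in> S then w S else 0) \<le> (\<Sum>S\<in>Pow A. if k \<in> S then w S else 0)"
       "(if k \<in> S then 0 else w S) \<le> (\<Sum>S\<in>Pow A. if k \<in> S then 0 else w S)"
    using finite nonneg assms(1) by (intro member_le_sum; simp)+
  then show ?thesis
    using marginal[OF assms(2)] one_minus_marginal[OF assms(2)] by (simp split: if_splits)
qed

lemma sum_weight_ln_bernoulli_product:
  "(\<Sum>S\<in>Pow A. w S * ln (bernoulli_product p A S))
     = (\<Sum>k\<in>A. p k * ln (p k) + (1 - p k) * ln (1 - p k))"
proof -
  define r where "r S k = (if k \<in> S then p k else 1 - p k)" for S k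
  have ln_product: "w S * ln (bernoulli_product p A S) = (\<Sum>k\<in>A. w S * ln (r S k))"
    if "S \<in> Pow A" for S
  proof (cases "w S = 0")
    case False
    then have "0 < r S k" if "k \<in> A" for k
      using weight_le_marginal_factor[OF \<open>S \<in> Pow A\<close> that] nonneg[OF \<open>S \<in> Pow A\<close>]
      by (simp add: r_def)
    then show ?thesis
      using ln_prod[OF finite, of "r S"] by (force simp: bernoulli_product_def r_def sum_distrib_left)
  qed simp
  have cross_entropy: "(\<Sum>S\<in>Pow A. w S * ln (r S k)) = p k * ln (p k) + (1 - p k) * ln (1 - p k)"
    if "k \<in> A" for k
  proof -
    have "(\<Sum>S\<in>Pow A. w S * ln (r S k)) = (\<Sum>S\<in>Pow A. (if k \<in> S then w S else 0) * ln (p k)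
            + (if k \<in> S then 0 else w S) * ln (1 - p k))"
      by (rule sum.cong) (auto simp: r_def)
    also have "\<dots> = p k * ln (p k) + (1 - p k) * ln (1 - p k)"
      unfolding sum.distrib sum_distrib_right[symmetric] marginal[OF that, symmetric]
        one_minus_marginal[OF that, symmetric] ..
    finally show ?thesis .
  qed
  have "(\<Sum>S\<in>Pow A. w S * ln (bernoulli_product p A S)) = (\<Sum>k\<in>A. \<Sum>S\<in>Pow A. w S * ln (r S k))"
    using ln_product by (simp add: sum.swap[of _ A])
  then show ?thesis
    using cross_entropy by simp
qed

lemma sum_marginal_negentropy_le_negentropy:
  "(\<Sum>k\<in>A. p k * ln (p k) + (1 - p k) * ln (1 - p k)) \<le> (\<Sum>S\<in>Pow A. w S * ln (w S))"
  unfolding sum_weight_ln_bernoulli_product[symmetric]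
proof (rule gibbs_inequality)
  fix S assume "S \<in> Pow A"
  have "0 \<le> (if k \<in> S then p k else 1 - p k)" if "k \<in> A" for k
    using marginal[OF that] one_minus_marginal[OF that] nonneg by (auto intro!: sum_nonneg)
  then show "0 \<le> bernoulli_product p A S"
    unfolding bernoulli_product_def by (intro prod_nonneg) blast
  assume "0 < w S"
  then show "0 < bernoulli_product p A S"
    unfolding bernoulli_product_def using weight_le_marginal_factor[OF \<open>S \<in> Pow A\<close>]
    by (intro prod_pos) (meson less_le_trans)
qed (use finite nonneg total sum_bernoulli_product[OF finite] in simp_all)

end

subsection \<open>Fourier analysis on the cube\<close>

lemma finite_cube: "finite (cube n)"
  by (simp add: cube_def finite_PiE)

lemma card_cube: "card (cube n) = 2 ^ n"
proof -
  have "card (cube n) = (\<Prod>i\<in>{0..<n}. card {-1, 1::real})"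
    unfolding cube_def by (simp add: card_PiE)
  also have "card {-1, 1::real} = 2"
    by simp
  finally show ?thesis
    by simp
qed

lemma cube_coordinate: "x \<in> cube n \<Longrightarrow> k < n \<Longrightarrow> x k = -1 \<or> x k = 1"
  unfolding cube_def by (auto simp: PiE_iff)

lemma sum_characters_mult:
  assumes x: "x \<in> cube n" and y: "y \<in> cube n"
  shows "(\<Sum>S\<in>Pow {0..<n}. (\<Prod>k\<in>S. x k) * (\<Prod>k\<in>S. y k)) = (if x = y then 2 ^ n else 0)"
proof -
  have "(\<Sum>S\<in>Pow {0..<n}. (\<Prod>k\<in>S. x k) * (\<Prod>k\<in>S. y k))
      = (\<Sum>S\<in>Pow {0..<n}. (\<Prod>k\<in>S. x k * y k) * (\<Prod>k\<in>{0..<n} - S. 1))"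
    by (simp add: prod.distrib)
  also have "\<dots> = (\<Prod>k\<in>{0..<n}. x k * y k + 1)"
    by (rule prod_add[symmetric]) simp
  finally have expand: "(\<Sum>S\<in>Pow {0..<n}. (\<Prod>k\<in>S. x k) * (\<Prod>k\<in>S. y k))
      = (\<Prod>k\<in>{0..<n}. x k * y k + 1)" .
  have factor: "x k * y k + 1 = (if x k = y k then 2 else 0)" if "k < n" for k
    using cube_coordinate[OF x that] cube_coordinate[OF y that] by auto
  show ?thesis
  proof (cases "x = y")
    case True
    then show ?thesis
      using expand factor by simp
  next
    case False
    then obtain k where "k < n" "x k \<noteq> y k"
      using x y unfolding cube_def by (metis PiE_ext atLeastLessThan_iff zero_le)
    then have "(\<Prod>k\<in>{0..<n}. x k * y k + 1) = 0"
      using factor by (intro prod_zero bexI[of _ k]) auto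
    then show ?thesis
      using expand False by simp
  qed
qed

lemma parseval:
  fixes g :: "(nat \<Rightarrow> real) \<Rightarrow> real"
  shows "(\<Sum>S\<in>Pow {0..<n}. (fourier_coeff n g S)\<^sup>2) = cube_exp n (\<lambda>x. (g x)\<^sup>2)"
proof -
  define N :: real where "N = 2 ^ n"
  define chr where "chr S x = (\<Prod>k\<in>S. x k)" for S and x :: "nat \<Rightarrow> real"
  have coeff: "fourier_coeff n g S = (\<Sum>x\<in>cube n. g x * chr S x) / N" for S
    by (simp add: fourier_coeff_def cube_exp_def card_cube N_def chr_def)
  have "(\<Sum>S\<in>Pow {0..<n}. (\<Sum>x\<in>cube n. g x * chr S x)\<^sup>2)
      = (\<Sum>S\<in>Pow {0..<n}. \<Sum>x\<in>cube n. \<Sum>y\<in>cube n. g x * g y * (chr S x * chr S y))"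
    unfolding power2_eq_square sum_product by (intro sum.cong refl) (simp add: mult_ac)
  also have "\<dots> = (\<Sum>x\<in>cube n. \<Sum>y\<in>cube n. g x * g y * (\<Sum>S\<in>Pow {0..<n}. chr S x * chr S y))"
    by (simp add: sum_distrib_left sum.swap[of _ "Pow {0..<n}"])
  also have "\<dots> = (\<Sum>x\<in>cube n. \<Sum>y\<in>cube n. if x = y then N * (g x)\<^sup>2 else 0)"
    by (intro sum.cong refl) (simp add: chr_def sum_characters_mult N_def power2_eq_square)
  also have "\<dots> = N * (\<Sum>x\<in>cube n. (g x)\<^sup>2)"
    by (simp add: finite_cube sum_distrib_left)
  finally show ?thesis
    unfolding coeff cube_exp_def card_cube
    by (simp add: power_divide sum_divide_distrib[symmetric] N_def power2_eq_square)
qed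

lemma flip_in_cube: "x \<in> cube n \<Longrightarrow> k < n \<Longrightarrow> flip k x \<in> cube n"
  unfolding cube_def flip_def by (auto simp: PiE_iff extensional_def)

lemma flip_flip [simp]: "flip k (flip k x) = x"
  unfolding flip_def by simp

lemma character_flip:
  assumes "finite S"
  shows "(\<Prod>j\<in>S. flip k x j) = (if k \<in> S then - (\<Prod>j\<in>S. x j) else (\<Prod>j\<in>S. x j))"
proof (cases "k \<in> S")
  case True
  have "(\<Prod>j\<in>S - {k}. flip k x j) = (\<Prod>j\<in>S - {k}. x j)"
    by (rule prod.cong) (auto simp: flip_def)
  then show ?thesis
    using True assms by (simp add: prod.remove flip_def)
next
  case False
  have "(\<Prod>j\<in>S. flip k x j) = (\<Prod>j\<in>S. x j)"
    by (rule prod.cong) (use False in \<open>auto simp: flip_def\<close>)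
  then show ?thesis
    using False by simp
qed

lemma sum_cube_flip:
  assumes "k < n"
  shows "(\<Sum>x\<in>cube n. h (flip k x)) = (\<Sum>x\<in>cube n. h x)"
  by (rule sum.reindex_bij_witness[of _ "flip k" "flip k"]) (use assms in \<open>auto simp: flip_in_cube\<close>)

lemma fourier_coeff_flip_difference:
  assumes "k < n" and "S \<in> Pow {0..<n}"
  shows "fourier_coeff n (\<lambda>x. (g x - g (flip k x)) / 2) S
           = (if k \<in> S then fourier_coeff n g S else 0)"
proof -
  have "finite S"
    using assms(2) finite_subset by auto
  have "(\<Sum>x\<in>cube n. g (flip k x) * (\<Prod>j\<in>S. x j))
      = (\<Sum>x\<in>cube n. g (flip k x) * (\<Prod>j\<in>S. flip k (flip k x) j))"
    by simp
  also have "\<dots> = (\<Sum>x\<in>cube n. g x * (\<Prod>j\<in>S. flip k x j))"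
    by (rule sum_cube_flip[OF assms(1)])
  also have "\<dots> = (if k \<in> S then - 1 else 1) * (\<Sum>x\<in>cube n. g x * (\<Prod>j\<in>S. x j))"
    by (simp add: character_flip[OF \<open>finite S\<close>] sum_negf)
  finally have "(\<Sum>x\<in>cube n. (g x - g (flip k x)) / 2 * (\<Prod>j\<in>S. x j))
      = (if k \<in> S then 1 else 0) * (\<Sum>x\<in>cube n. g x * (\<Prod>j\<in>S. x j))"
    by (simp add: left_diff_distrib sum_subtractf sum_divide_distrib[symmetric])
  then show ?thesis
    unfolding fourier_coeff_def cube_exp_def by simp
qed

text \<open>For Boolean \<open>f\<close>, \<open>((f x - f (flip k x)) / 2)\<^sup>2\<close> is the indicator of \<open>f x \<noteq> f (flip k x)\<close>,
  so Parseval applied to this derivative computes the influence.\<close>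
lemma influence_eq_sum_fourier_coeff:
  assumes f: "boolean_fun n f" and k: "k < n"
  shows "influence n f k = (\<Sum>S\<in>Pow {0..<n}. if k \<in> S then (fourier_coeff n f S)\<^sup>2 else 0)"
proof -
  define D where "D = (\<lambda>x. (f x - f (flip k x)) / 2)"
  have "(D x)\<^sup>2 = (if f x \<noteq> f (flip k x) then 1 else 0)" if "x \<in> cube n" for x
  proof -
    have "f x \<in> {-1, 1}" "f (flip k x) \<in> {-1, 1}"
      using f that flip_in_cube[OF that k] unfolding boolean_fun_def by blast+
    then show ?thesis
      unfolding D_def by auto
  qed
  then have "cube_exp n (\<lambda>x. (D x)\<^sup>2) = influence n f k"
    by (simp add: cube_exp_def influence_def cube_prob_def sum.If_cases finite_cube Int_def)
  also have "cube_exp n (\<lambda>x. (D x)\<^sup>2) = (\<Sum>S\<in>Pow {0..<n}. (fourier_coeff n D S)\<^sup>2)"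
    by (rule parseval[symmetric])
  also have "\<dots> = (\<Sum>S\<in>Pow {0..<n}. if k \<in> S then (fourier_coeff n f S)\<^sup>2 else 0)"
    by (rule sum.cong) (simp_all add: D_def fourier_coeff_flip_difference[OF k])
  finally show ?thesis
    by simp
qed

lemma sum_fourier_coeff_squares:
  assumes "boolean_fun n f"
  shows "(\<Sum>S\<in>Pow {0..<n}. (fourier_coeff n f S)\<^sup>2) = 1"
proof -
  have "(\<Sum>x\<in>cube n. (f x)\<^sup>2) = (\<Sum>x\<in>cube n. 1)"
    by (rule sum.cong) (use assms in \<open>auto simp: boolean_fun_def\<close>)
  then show ?thesis
    by (simp add: parseval cube_exp_def card_cube)
qed

theorem mainTheorem9:
  fixes n :: nat and f :: "(nat \<Rightarrow> real) \<Rightarrow> real" and \<epsilon> :: real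
  assumes "boolean_fun n f"
    and "0 < \<epsilon>" and "\<epsilon> < 1/2"
  shows "(\<Sum>S\<in>Pow {0..<n}. \<bar>fourier_coeff n f S\<bar> powr (2 * (1 + \<epsilon>)))
          \<ge> 1 - (3 * \<epsilon> + 2 * \<epsilon>^2) * total_influence n f
              - (\<Sum>k<n. if influence n f k = 0 then 0
                         else ((influence n f k / 4) powr (- \<epsilon>) - 1) * influence n f k)"
proof -
  define w where "w = (\<lambda>S. (fourier_coeff n f S)\<^sup>2)"
  define I where "I = influence n f"
  have total: "(\<Sum>S\<in>Pow {0..<n}. w S) = 1"
    unfolding w_def by (rule sum_fourier_coeff_squares[OF assms(1)])
  have marginal: "I k = (\<Sum>S\<in>Pow {0..<n}. if k \<in> S then w S else 0)" if "k \<in> {0..<n}" for k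
    unfolding I_def w_def using influence_eq_sum_fourier_coeff[OF assms(1)] that by simp
  have I_bounds: "0 \<le> I k \<and> I k \<le> 1" if "k \<in> {0..<n}" for k
    using sum_mono[of "Pow {0..<n}" "\<lambda>S. if k \<in> S then w S else 0" w] total
    by (simp add: marginal[OF that] w_def sum_nonneg)
  have "1 - (3 * \<epsilon> + 2 * \<epsilon>^2) * total_influence n f
              - (\<Sum>k<n. if I k = 0 then 0 else ((I k / 4) powr (- \<epsilon>) - 1) * I k)
      = 1 + (\<Sum>k\<in>{0..<n}. - (3 * \<epsilon> + 2 * \<epsilon>\<^sup>2) * I k
                              - (if I k = 0 then 0 else ((I k / 4) powr (- \<epsilon>) - 1) * I k))"
    by (simp add: total_influence_def I_def sum_subtractf sum_distrib_left lessThan_atLeast0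
        flip: sum_negf) (simp add: algebra_simps)
  also have "\<dots> \<le> 1 + \<epsilon> * (\<Sum>k\<in>{0..<n}. I k * ln (I k) + (1 - I k) * ln (1 - I k))"
    unfolding add_le_cancel_left sum_distrib_left
    using I_bounds assms(2)
    by (intro sum_mono binary_negentropy_lower_bound) auto
  also have "\<dots> \<le> 1 + \<epsilon> * (\<Sum>S\<in>Pow {0..<n}. w S * ln (w S))"
    using sum_marginal_negentropy_le_negentropy[OF _ _ total marginal] assms(2)
    by (simp add: w_def)
  also have "\<dots> \<le> (\<Sum>S\<in>Pow {0..<n}. w S powr (1 + \<epsilon>))"
    by (rule sum_powr_ge_one_plus_negentropy[OF _ _ total]) (simp_all add: w_def)
  also have "\<dots> = (\<Sum>S\<in>Pow {0..<n}. \<bar>fourier_coeff n f S\<bar> powr (2 * (1 + \<epsilon>)))"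
    unfolding w_def abs_powr_double ..
  finally show ?thesis
    by (simp only: I_def)
qed

end
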